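(* For an integer $m\ge0$ let $\mathbf{S}_m=\{1,\dots,m\}^2$, and let $A_{\mathbf{S}}(m,k)$ be the number of $k$-element subsets of $\mathbf{S}_m$ such that no two distinct elements $(i,j),(i',j')$ satisfy $i=i'$ or $i-j=i'-j'$ (nonattacking placements of $k$ anassas with moves $(0,1),(1,1)$). Then for all integers $m,k\ge0$, $$A_{\mathbf{S}}(m,k)=\sum_{j=0}^{\lceil k/2\rceil}(m-k+j)_j\left\{ {m \atop m-k+j}\right\}2^{k-2j}\left[\binom{k-j}{j-1}+\binom{k-j+1}{j}\right].$$
   Context: $(x)_j=x(x-1)\cdots(x-j+1)$, $(x)_0=1$. Stirling numbers of the second kind $\left\{ {n \atop r}\right\}$ are used in the extended sense for all integers: usual values for $n,r\ge0$; $\left\{ {n \atop r}\right\}=\left[{-r\atop -n}\right]$ (unsigned Stirling number of the first kind) for $n,r\le0$; and $0$ when one of $n,r$ is positive and the other negative. Binomial coefficients are extended to all integers (Kronenburg's convention): $\binom{n}{r}=n(n-1)\cdots(n-r+1)/r!$ if $r\ge0$; $\binom{n}{r}=(-1)^{n-r}\binom{-r-1}{n-r}$ if $r\le n<0$; $0$ otherwise. *)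

theory Defs
  imports Complex_Main "HOL-Combinatorics.Stirling"
begin

definition falling_fact :: "int \<Rightarrow> nat \<Rightarrow> int" where
  "falling_fact x j = (\<Prod>i<j. x - int i)"

definition Stirling2_ext :: "int \<Rightarrow> int \<Rightarrow> int" where
  "Stirling2_ext n r =
     (if n \<ge> 0 \<and> r \<ge> 0 then int (Stirling (nat n) (nat r))
      else if n \<le> 0 \<and> r \<le> 0 then int (stirling (nat (- r)) (nat (- n)))
      else 0)"

text \<open>Binomial coefficients extended to all integers (Kronenburg's convention);
  the division by r! is exact.\<close>
definition binom_ext :: "int \<Rightarrow> int \<Rightarrow> int" where
  "binom_ext n r =
     (if r \<ge> 0 then falling_fact n (nat r) div fact (nat r)
      else if r \<le> n \<and> n < 0 then (-1) ^ nat (n - r) * (falling_fact (- r - 1) (nat (n - r)) div fact (nat (n - r)))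
      else 0)"

definition anassa_count :: "nat \<Rightarrow> nat \<Rightarrow> nat" where
  "anassa_count m k = card {A. A \<subseteq> {1..int m} \<times> {1..int m} \<and> card A = k \<and>
      (\<forall>i j i' j'. (i, j) \<in> A \<longrightarrow> (i', j') \<in> A \<longrightarrow> (i, j) \<noteq> (i', j') \<longrightarrow>
          i \<noteq> i' \<and> i - j \<noteq> i' - j')}"

end

theory Submission
  imports Defs
begin

(* Refine the count by the number d of pieces strictly below the main diagonal.  The board of
   size m + 1 arises from the board of size m by shifting every cell on or above the main
   diagonal one column to the right: this keeps rows, keeps distinct diagonals distinct, and
   leaves exactly the main diagonal and the last row uncovered.  So a placement on the larger
   board is a shifted placement plus at most one piece on the main diagonal and at most one in
   the last row, which gives a linear recurrence in m for the refined counts N(m, k, d).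
   The expression  sum_j (m - k + j)_j S(m, m - k + j) [y^j x^d] F_(k+1),  built from the
   polynomials  F_0 = 1/x,  F_1 = 1,  F_(n+2) = (1 + x) F_(n+1) + x y F_n,  satisfies the same
   recurrence and initial values, thanks to a first order differential identity for F_n, so it
   equals N(m, k, d).  Summing over d evaluates at x = 1, and the coefficients of F_(k+1)(1, y)
   are  2^(k-2j) [(k-j choose j-1) + (k-j+1 choose j)]. *)

section \<open>Nonattacking placements and the refined count\<close>

abbreviation diag :: "int \<times> int \<Rightarrow> int" where
  "diag c \<equiv> fst c - snd c"

abbreviation board :: "nat \<Rightarrow> (int \<times> int) set" where
  "board m \<equiv> {1..int m} \<times> {1..int m}"

definition nonattacking :: "nat \<Rightarrow> (int \<times> int) set \<Rightarrow> bool" where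
  "nonattacking m A \<longleftrightarrow> A \<subseteq> board m \<and> inj_on fst A \<and> inj_on diag A"

definition placements :: "nat \<Rightarrow> (int \<times> int) set set" where
  "placements m = {A. nonattacking m A}"

lemma nonattacking_iff:
  "nonattacking m A \<longleftrightarrow>
     A \<subseteq> board m \<and> (\<forall>c\<in>A. \<forall>c'\<in>A. c \<noteq> c' \<longrightarrow> fst c \<noteq> fst c' \<and> diag c \<noteq> diag c')"
  unfolding nonattacking_def inj_on_def by blast

lemma anassa_count_eq_card_placements: "anassa_count m k = card {A \<in> placements m. card A = k}"
  unfolding anassa_count_def placements_def nonattacking_iff Ball_def split_paired_All
  by (rule arg_cong[where f = card]) auto

lemma finite_placements: "finite (placements m)"
  by (rule finite_subset[of _ "Pow (board m)"]) (auto simp: placements_def nonattacking_def)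

lemma nonattacking_finite: "nonattacking m A \<Longrightarrow> finite A"
  unfolding nonattacking_def by (meson finite_SigmaI finite_atLeastAtMost_int finite_subset)

lemma nonattacking_subset: "nonattacking m A \<Longrightarrow> B \<subseteq> A \<Longrightarrow> nonattacking m B"
  unfolding nonattacking_def by (meson inj_on_subset order_trans)

lemma card_le_if_nonattacking:
  assumes "nonattacking m A"
  shows "card A \<le> m"
proof -
  have "card A = card (fst ` A)"
    using assms by (simp add: nonattacking_def card_image)
  also have "\<dots> \<le> card {1..int m}"
    using assms by (intro card_mono) (auto simp: nonattacking_def)
  finally show ?thesis
    by simp
qed

lemma anassa_count_eq_0:
  assumes "m < k"
  shows "anassa_count m k = 0"
proof -
  have "{A \<in> placements m. card A = k} = {}"
    using assms card_le_if_nonattacking by (fastforce simp: placements_def)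
  then show ?thesis
    by (metis anassa_count_eq_card_placements card.empty)
qed

definition below_diag :: "(int \<times> int) set \<Rightarrow> nat" where
  "below_diag A = card {c \<in> A. snd c < fst c}"

lemma below_diag_le_card: "finite A \<Longrightarrow> below_diag A \<le> card A"
  unfolding below_diag_def by (rule card_mono) auto

lemma below_diag_empty [simp]: "below_diag {} = 0"
  by (simp add: below_diag_def)

lemma below_diag_insert [simp]:
  assumes "finite A" "c \<notin> A"
  shows "below_diag (insert c A) = of_bool (snd c < fst c) + below_diag A"
proof -
  have "{x \<in> insert c A. snd x < fst x}
      = (if snd c < fst c then insert c {x \<in> A. snd x < fst x} else {x \<in> A. snd x < fst x})"
    by auto
  then show ?thesis
    using assms by (simp add: below_diag_def)
qed

text \<open>The integer arguments make the recurrence below uniform in \<open>k\<close> and \<open>d\<close>: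
  counts with a negative argument are simply zero.\<close>

definition refined_count :: "nat \<Rightarrow> int \<Rightarrow> int \<Rightarrow> int" where
  "refined_count m k d = int (card {A \<in> placements m. int (card A) = k \<and> int (below_diag A) = d})"

lemma refined_count_eq_sum:
  "refined_count m k d = (\<Sum>A\<in>placements m. of_bool (int (card A) = k \<and> int (below_diag A) = d))"
  by (simp add: refined_count_def finite_placements Int_def conj_commute)

lemma refined_count_0: "refined_count 0 k d = (if k = 0 \<and> d = 0 then 1 else 0)"
proof -
  have "placements 0 = {{}}"
    by (auto simp: placements_def nonattacking_def)
  then show ?thesis
    by (simp add: refined_count_eq_sum)
qed

lemma anassa_count_eq_sum_refined_count:
  "int (anassa_count m k) = (\<Sum>d\<in>{0..int k}. refined_count m (int k) d)"
proof -
  have "int (anassa_count m k) = (\<Sum>Y\<in>placements m. of_bool (card Y = k))"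
    by (simp add: anassa_count_eq_card_placements finite_placements Int_def)
  also have "\<dots> = (\<Sum>Y\<in>placements m. \<Sum>d\<in>{0..int k}.
      of_bool (int (card Y) = int k \<and> int (below_diag Y) = d))"
  proof (rule sum.cong)
    fix Y assume "Y \<in> placements m"
    then have "below_diag Y \<le> card Y"
      by (simp add: placements_def below_diag_le_card nonattacking_finite)
    then show "of_bool (card Y = k)
        = (\<Sum>d\<in>{0..int k}. of_bool (int (card Y) = int k \<and> int (below_diag Y) = d))"
      by (cases "card Y = k") (simp_all add: of_bool_def sum.delta')
  qed simp
  also have "\<dots> = (\<Sum>d\<in>{0..int k}. refined_count m (int k) d)"
    by (simp add: refined_count_eq_sum sum.swap[of _ "placements m"])
  finally show ?thesis .
qed

section \<open>Enlarging the board\<close>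

definition shift_cell :: "int \<times> int \<Rightarrow> int \<times> int" where
  "shift_cell c = (if snd c < fst c then c else (fst c, snd c + 1))"

definition new_cells :: "nat \<Rightarrow> (int \<times> int) set" where
  "new_cells m = {c \<in> board (Suc m). fst c = int m + 1 \<or> fst c = snd c}"

lemma inj_shift_cell: "inj shift_cell"
  unfolding inj_def shift_cell_def by (auto simp: prod_eq_iff)

lemma fst_shift_cell [simp]: "fst (shift_cell c) = fst c"
  by (simp add: shift_cell_def)

lemma snd_shift_cell [simp]: "snd (shift_cell c) = (if snd c < fst c then snd c else snd c + 1)"
  by (simp add: shift_cell_def)

lemma diag_shift_cell: "diag \<circ> shift_cell = (\<lambda>t. if 0 < t then t else t - 1) \<circ> diag"
  by (auto simp: shift_cell_def)

lemma board_Suc: "board (Suc m) = shift_cell ` board m \<union> new_cells m"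
proof
  show "shift_cell ` board m \<union> new_cells m \<subseteq> board (Suc m)"
    by (auto simp: shift_cell_def new_cells_def)
  show "board (Suc m) \<subseteq> shift_cell ` board m \<union> new_cells m"
  proof
    fix c assume c: "c \<in> board (Suc m)"
    obtain i j where ij: "c = (i, j)"
      by fastforce
    show "c \<in> shift_cell ` board m \<union> new_cells m"
    proof (cases "c \<in> new_cells m")
      case False
      then have "i \<le> int m" "i \<noteq> j"
        using c by (auto simp: new_cells_def ij)
      then consider "j < i" | "i < j"
        by linarith
      then have "c \<in> shift_cell ` board m"
      proof cases
        case 1
        then show ?thesis
          using c \<open>i \<le> int m\<close>
          by (intro image_eqI[of _ _ "(i, j)"]) (auto simp: shift_cell_def ij)
      next
        case 2
        then show ?thesis
          using c \<open>i \<le> int m\<close>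
          by (intro image_eqI[of _ _ "(i, j - 1)"]) (auto simp: shift_cell_def ij)
      qed
      then show ?thesis
        by blast
    qed simp
  qed
qed

lemma shift_disjoint_new_cells: "A \<subseteq> board m \<Longrightarrow> shift_cell ` A \<inter> new_cells m = {}"
  by (auto simp: shift_cell_def new_cells_def)

lemma nonattacking_shift_iff:
  assumes "A \<subseteq> board m"
  shows "nonattacking (Suc m) (shift_cell ` A) \<longleftrightarrow> nonattacking m A"
proof -
  have inj: "inj_on shift_cell A"
    using inj_shift_cell by (rule inj_on_subset) simp
  have "shift_cell ` A \<subseteq> board (Suc m)"
    using assms board_Suc[of m] by blast
  moreover have "inj_on fst (shift_cell ` A) \<longleftrightarrow> inj_on fst A"
    using inj by (intro inj_on_image_iff) simp_all
  moreover have "inj_on diag (shift_cell ` A) \<longleftrightarrow> inj_on diag A"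
    using inj by (intro inj_on_image_iff) (auto simp: shift_cell_def)
  ultimately show ?thesis
    using assms by (auto simp: nonattacking_def)
qed

lemma shift_Un_new_cells_eqD:
  assumes "A \<subseteq> board m" "A' \<subseteq> board m" "Z \<subseteq> new_cells m" "Z' \<subseteq> new_cells m"
    and eq: "shift_cell ` A \<union> Z = shift_cell ` A' \<union> Z'"
  shows "A = A'" and "Z = Z'"
proof -
  have split_unique: "B = B' \<and> C = C'"
    if "B \<union> C = B' \<union> C'" "B \<inter> N = {}" "B' \<inter> N = {}" "C \<subseteq> N" "C' \<subseteq> N"
    for B B' C C' N :: "(int \<times> int) set"
    using that by blast
  have "shift_cell ` A = shift_cell ` A' \<and> Z = Z'"
    using assms shift_disjoint_new_cells by (intro split_unique[OF eq]) simp_all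
  then show "A = A'" "Z = Z'"
    using inj_shift_cell by (simp_all add: inj_image_eq_iff)
qed

lemma nonattacking_Suc_decompose:
  assumes X: "nonattacking (Suc m) X"
  obtains Y where "nonattacking m Y" and "shift_cell ` Y = X - new_cells m"
proof
  define Y where "Y = {c \<in> board m. shift_cell c \<in> X}"
  have "shift_cell ` Y = shift_cell ` board m \<inter> X"
    by (auto simp: Y_def)
  also have "\<dots> = X - new_cells m"
    using X board_Suc[of m] shift_disjoint_new_cells[of "board m" m]
    by (auto simp: nonattacking_def)
  finally show shift_Y: "shift_cell ` Y = X - new_cells m" .
  have "nonattacking (Suc m) (shift_cell ` Y)"
    using nonattacking_subset[OF X] shift_Y by simp
  then show "nonattacking m Y"
    using nonattacking_shift_iff[of Y m] by (simp add: Y_def)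
qed

definition extensions :: "nat \<Rightarrow> (int \<times> int) set \<Rightarrow> (int \<times> int) set set" where
  "extensions m Y = {Z. Z \<subseteq> new_cells m \<and> nonattacking (Suc m) (shift_cell ` Y \<union> Z)}"

lemma finite_new_cells: "finite (new_cells m)"
  by (rule finite_subset[of _ "board (Suc m)"]) (auto simp: new_cells_def)

lemma finite_extensions: "finite (extensions m Y)"
  by (rule finite_subset[of _ "Pow (new_cells m)"]) (auto simp: extensions_def finite_new_cells)

lemma bij_betw_extend:
  "bij_betw (\<lambda>(Y, Z). shift_cell ` Y \<union> Z)
     (SIGMA Y:placements m. extensions m Y) (placements (Suc m))"
proof (rule bij_betw_imageI)
  show "inj_on (\<lambda>(Y, Z). shift_cell ` Y \<union> Z) (SIGMA Y:placements m. extensions m Y)"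
  proof (rule inj_onI, clarsimp)
    fix Y Z Y' Z'
    assume "Y \<in> placements m" "Z \<in> extensions m Y" "Y' \<in> placements m" "Z' \<in> extensions m Y'"
      and eq: "shift_cell ` Y \<union> Z = shift_cell ` Y' \<union> Z'"
    then have "Y \<subseteq> board m" "Y' \<subseteq> board m" "Z \<subseteq> new_cells m" "Z' \<subseteq> new_cells m"
      by (simp_all add: placements_def nonattacking_def extensions_def)
    then show "Y = Y' \<and> Z = Z'"
      using shift_Un_new_cells_eqD[OF _ _ _ _ eq] by blast
  qed
  have "X \<in> (\<lambda>(Y, Z). shift_cell ` Y \<union> Z) ` (SIGMA Y:placements m. extensions m Y)"
    if X: "nonattacking (Suc m) X" for X
  proof -
    obtain Y where Y: "nonattacking m Y" "shift_cell ` Y = X - new_cells m"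
      using nonattacking_Suc_decompose[OF X] by blast
    then have "X \<inter> new_cells m \<in> extensions m Y" "X = shift_cell ` Y \<union> X \<inter> new_cells m"
      using X by (auto simp: extensions_def Un_Diff_Int)
    then show ?thesis
      using Y by (auto simp: placements_def intro!: image_eqI[of _ _ "(Y, X \<inter> new_cells m)"])
  qed
  then show "(\<lambda>(Y, Z). shift_cell ` Y \<union> Z) ` (SIGMA Y:placements m. extensions m Y)
      = placements (Suc m)"
    by (auto simp: placements_def extensions_def)
qed

lemma sum_placements_Suc:
  "(\<Sum>X\<in>placements (Suc m). f X) = (\<Sum>Y\<in>placements m. \<Sum>Z\<in>extensions m Y. f (shift_cell ` Y \<union> Z))"
  by (simp add: sum.reindex_bij_betw[OF bij_betw_extend, symmetric] sum.Sigma finite_placements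
      finite_extensions split_def)

definition free_rows :: "nat \<Rightarrow> (int \<times> int) set \<Rightarrow> int set" where
  "free_rows m Y = {1..int m} - fst ` Y"

definition free_diags :: "nat \<Rightarrow> (int \<times> int) set \<Rightarrow> int set" where
  "free_diags m Y = {1..int m} - diag ` Y"

lemma card_free_rows:
  assumes "nonattacking m Y"
  shows "card (free_rows m Y) = m - card Y"
proof -
  have "fst ` Y \<subseteq> {1..int m}" "card (fst ` Y) = card Y"
    using assms by (auto simp: nonattacking_def card_image)
  then show ?thesis
    by (simp add: free_rows_def card_Diff_subset finite_subset)
qed

lemma card_free_diags:
  assumes "nonattacking m Y"
  shows "card (free_diags m Y) = m - below_diag Y"
proof -
  have "{1..int m} \<inter> diag ` Y = diag ` {c \<in> Y. snd c < fst c}"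
    using assms by (auto simp: nonattacking_def subset_eq image_iff)
  moreover have "card (diag ` {c \<in> Y. snd c < fst c}) = below_diag Y"
    using assms inj_on_subset[of diag Y "{c \<in> Y. snd c < fst c}"]
    by (simp add: nonattacking_def below_diag_def card_image)
  moreover have "card ({1..int m} - diag ` Y) = card {1..int m} - card ({1..int m} \<inter> diag ` Y)"
    by (rule card_Diff_subset_Int) simp
  ultimately show ?thesis
    by (simp add: free_diags_def)
qed

lemma inj_on_Un_disjoint:
  "A \<inter> B = {} \<Longrightarrow> inj_on f (A \<union> B) \<longleftrightarrow> inj_on f A \<and> inj_on f B \<and> f ` A \<inter> f ` B = {}"
  by (simp add: inj_on_Un Diff_triv Int_commute)

lemma extensions_iff:
  assumes "nonattacking m Y"
  shows "Z \<in> extensions m Y \<longleftrightarrow> Z \<subseteq> new_cells m \<and> inj_on fst Z \<and> inj_on diag Z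
    \<and> fst ` Z \<inter> fst ` Y = {} \<and> diag ` Z \<inter> diag ` Y \<inter> {0<..} = {}"
proof (cases "Z \<subseteq> new_cells m")
  case True
  let ?S = "shift_cell ` Y"
  have Y: "Y \<subseteq> board m" "nonattacking (Suc m) ?S"
    using assms nonattacking_shift_iff[of Y m] by (simp_all add: nonattacking_def)
  have "?S \<inter> Z = {}"
    using True shift_disjoint_new_cells[OF Y(1)] by blast
  moreover have "?S \<union> Z \<subseteq> board (Suc m)"
    using True Y(2) unfolding nonattacking_def new_cells_def by blast
  ultimately have "Z \<in> extensions m Y \<longleftrightarrow> inj_on fst Z \<and> fst ` ?S \<inter> fst ` Z = {}
      \<and> inj_on diag Z \<and> diag ` ?S \<inter> diag ` Z = {}"
    using True Y(2) by (simp add: extensions_def nonattacking_def inj_on_Un_disjoint)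
  moreover have "fst ` ?S = fst ` Y"
    by (simp add: image_image)
  moreover have "diag ` ?S \<inter> diag ` Z = diag ` Z \<inter> diag ` Y \<inter> {0<..}"
  proof -
    have "diag ` ?S = (\<lambda>t. if 0 < t then t else t - 1) ` diag ` Y"
      by (simp only: image_comp diag_shift_cell)
    also have "\<dots> \<inter> {0..} = diag ` Y \<inter> {0<..}"
      by (force split: if_splits)
    moreover have "diag ` Z \<subseteq> {0..}"
      using True by (auto simp: new_cells_def)
    ultimately show ?thesis
      by blast
  qed
  ultimately show ?thesis
    using True by auto
next
  case False
  then show ?thesis
    by (simp add: extensions_def)
qed

lemma inj_on_image_subset_singleton: "inj_on f A \<Longrightarrow> f ` A \<subseteq> {v} \<Longrightarrow> \<exists>a. A \<subseteq> {a}"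
  unfolding inj_on_def by blast

lemma subset_doubleton_cases: "Z \<subseteq> {a, b} \<Longrightarrow> Z = {} \<or> Z = {a} \<or> Z = {b} \<or> Z = {a, b}"
proof -
  assume "Z \<subseteq> {a, b}"
  then have "Z \<in> Pow {a, b}"
    by simp
  then show ?thesis
    by (simp add: Pow_insert) blast
qed

lemma new_cells_subset_pair:
  assumes Z: "Z \<subseteq> new_cells m" "inj_on fst Z" "inj_on diag Z"
  shows "\<exists>i j. j \<le> int m \<and> Z \<subseteq> {(i, i), (int m + 1, j)}"
proof -
  define D where "D = {z \<in> Z. fst z = snd z}"
  have "inj_on diag D"
    using Z(3) by (rule inj_on_subset) (simp add: D_def)
  moreover have "diag ` D \<subseteq> {0}"
    by (auto simp: D_def)
  ultimately obtain a where "D \<subseteq> {a}"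
    using inj_on_image_subset_singleton[of diag D 0] by blast
  then have D: "D \<subseteq> {(fst a, fst a)}"
    by (auto simp: D_def prod_eq_iff)
  have "inj_on fst (Z - D)"
    using Z(2) by (rule inj_on_subset) simp
  moreover have "fst ` (Z - D) \<subseteq> {int m + 1}"
    using Z(1) by (auto simp: D_def new_cells_def)
  ultimately obtain b where "Z - D \<subseteq> {b}"
    using inj_on_image_subset_singleton[of fst "Z - D" "int m + 1"] by blast
  have "z = (int m + 1, min (snd b) (int m))" if "z \<in> Z - D" for z
  proof -
    have "z = b" "fst z = int m + 1" "snd z \<le> int m"
      using that \<open>Z - D \<subseteq> {b}\<close> Z(1) by (auto simp: D_def new_cells_def)
    then show ?thesis
      by (simp add: prod_eq_iff)
  qed
  then have "Z - D \<subseteq> {(int m + 1, min (snd b) (int m))}"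
    by blast
  then show ?thesis
    using D by (intro exI[of _ "fst a"] exI[of _ "min (snd b) (int m)"]) auto
qed

lemma extension_cells:
  assumes Y: "nonattacking m Y"
  shows "i \<in> insert (int m + 1) (free_rows m Y) \<Longrightarrow> {(i, i)} \<in> extensions m Y"
    and "t \<in> free_diags m Y \<Longrightarrow> {(int m + 1, int m + 1 - t)} \<in> extensions m Y"
    and "i \<in> free_rows m Y \<Longrightarrow> t \<in> free_diags m Y
      \<Longrightarrow> {(i, i), (int m + 1, int m + 1 - t)} \<in> extensions m Y"
proof -
  have "fst ` Y \<subseteq> {1..int m}"
    using Y by (auto simp: nonattacking_def)
  then have rows: "i \<notin> fst ` Y" "1 \<le> i" "i \<le> int m + 1"
    if "i \<in> insert (int m + 1) (free_rows m Y)" for i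
    using that by (auto simp: free_rows_def)
  have diags: "t \<notin> diag ` Y" "1 \<le> t" "t \<le> int m" if "t \<in> free_diags m Y" for t
    using that by (simp_all add: free_diags_def)
  show "{(i, i)} \<in> extensions m Y" if "i \<in> insert (int m + 1) (free_rows m Y)"
    using rows[OF that] by (simp add: extensions_iff[OF Y] new_cells_def Int_absorb2 disjoint_iff)
  show "{(int m + 1, int m + 1 - t)} \<in> extensions m Y" if "t \<in> free_diags m Y"
    using diags[OF that] rows[of "int m + 1"] by (simp add: extensions_iff[OF Y] new_cells_def)
  show "{(i, i), (int m + 1, int m + 1 - t)} \<in> extensions m Y"
    if "i \<in> free_rows m Y" "t \<in> free_diags m Y"
    using rows[of i] rows[of "int m + 1"] diags[OF that(2)] that(1)
    by (auto simp: extensions_iff[OF Y] new_cells_def free_rows_def)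
qed

lemma extension_cellsD:
  assumes Y: "nonattacking m Y" and Z: "Z \<in> extensions m Y"
  shows "(i, i) \<in> Z \<Longrightarrow> i \<in> insert (int m + 1) (free_rows m Y)"
    and "(int m + 1, j) \<in> Z \<Longrightarrow> j \<le> int m \<Longrightarrow> int m + 1 - j \<in> free_diags m Y"
proof -
  have Z: "Z \<subseteq> new_cells m" "fst ` Z \<inter> fst ` Y = {}" "diag ` Z \<inter> diag ` Y \<inter> {0<..} = {}"
    using Z by (simp_all add: extensions_iff[OF Y])
  show "i \<in> insert (int m + 1) (free_rows m Y)" if "(i, i) \<in> Z"
  proof -
    have "i \<in> fst ` Z"
      using that by (rule rev_image_eqI) simp
    then have "i \<notin> fst ` Y"
      using Z(2) by (metis IntI empty_iff)
    then show ?thesis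
      using that Z(1) by (auto simp: new_cells_def free_rows_def)
  qed
  show "int m + 1 - j \<in> free_diags m Y" if "(int m + 1, j) \<in> Z" "j \<le> int m"
  proof -
    have "int m + 1 - j \<in> diag ` Z" "0 < int m + 1 - j" "1 \<le> j"
      using that Z(1) by (force, simp, force simp: new_cells_def)
    then show ?thesis
      using Z(3) that(2) by (auto simp: free_diags_def)
  qed
qed

lemma extensions_eq:
  assumes Y: "nonattacking m Y"
  shows "extensions m Y = insert {} ((\<lambda>i. {(i, i)}) ` insert (int m + 1) (free_rows m Y)
    \<union> (\<lambda>t. {(int m + 1, int m + 1 - t)}) ` free_diags m Y
    \<union> (\<lambda>(i, t). {(i, i), (int m + 1, int m + 1 - t)}) ` (free_rows m Y \<times> free_diags m Y))"
    (is "_ = ?E")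
proof
  have "{} \<in> extensions m Y"
    by (simp add: extensions_iff[OF Y])
  then show "?E \<subseteq> extensions m Y"
    using extension_cells[OF Y] by auto
  show "extensions m Y \<subseteq> ?E"
  proof
    fix Z assume Z: "Z \<in> extensions m Y"
    then have "Z \<subseteq> new_cells m" "inj_on fst Z" "inj_on diag Z"
      by (simp_all add: extensions_iff[OF Y])
    then obtain i j where j: "j \<le> int m" and "Z \<subseteq> {(i, i), (int m + 1, j)}"
      using new_cells_subset_pair by blast
    have ne: "i \<noteq> int m + 1" if "(i, i) \<in> Z" "(int m + 1, j) \<in> Z"
      using inj_onD[OF \<open>inj_on fst Z\<close> _ that] j by auto
    from \<open>Z \<subseteq> {(i, i), (int m + 1, j)}\<close>
    have "Z = {} \<or> Z = {(i, i)} \<or> Z = {(int m + 1, j)} \<or> Z = {(i, i), (int m + 1, j)}"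
      by (rule subset_doubleton_cases)
    then show "Z \<in> ?E"
    proof (elim disjE)
      assume "Z = {(i, i)}"
      then show ?thesis
        using extension_cellsD(1)[OF Y Z] by blast
    next
      assume "Z = {(int m + 1, j)}"
      then show ?thesis
        using extension_cellsD(2)[OF Y Z _ j]
        by (intro insertI2 UnI1 UnI2 image_eqI[of _ _ "int m + 1 - j"]) simp_all
    next
      assume pair: "Z = {(i, i), (int m + 1, j)}"
      then have "i \<in> free_rows m Y" "int m + 1 - j \<in> free_diags m Y"
        using extension_cellsD(1)[OF Y Z, of i] extension_cellsD(2)[OF Y Z _ j] ne by auto
      then show ?thesis
        using pair by (intro insertI2 UnI2 image_eqI[of _ _ "(i, int m + 1 - j)"]) simp_all
    qed simp
  qed
qed

lemma card_below_diag_extend: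
  assumes Y: "nonattacking m Y" and Z: "Z \<in> extensions m Y"
  shows "card (shift_cell ` Y \<union> Z) = card Y + card Z"
    and "below_diag (shift_cell ` Y \<union> Z) = below_diag Y + below_diag Z"
proof -
  have "Z \<subseteq> new_cells m" "Y \<subseteq> board m"
    using Y Z by (simp_all add: extensions_def nonattacking_def)
  moreover have "finite Y" "finite Z"
    using Y nonattacking_finite finite_subset[OF \<open>Z \<subseteq> new_cells m\<close> finite_new_cells] by auto
  ultimately have fin: "finite (shift_cell ` Y)" "finite Z" and disj: "shift_cell ` Y \<inter> Z = {}"
    using shift_disjoint_new_cells[of Y m] by auto
  have inj: "inj_on shift_cell A" for A
    using inj_shift_cell by (rule inj_on_subset) simp
  show "card (shift_cell ` Y \<union> Z) = card Y + card Z"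
    using card_Un_disjoint[OF fin disj] card_image[OF inj] by simp
  have "{c \<in> shift_cell ` Y \<union> Z. snd c < fst c}
      = shift_cell ` {c \<in> Y. snd (shift_cell c) < fst (shift_cell c)} \<union> {c \<in> Z. snd c < fst c}"
    by blast
  also have "{c \<in> Y. snd (shift_cell c) < fst (shift_cell c)} = {c \<in> Y. snd c < fst c}"
    by auto
  finally have "{c \<in> shift_cell ` Y \<union> Z. snd c < fst c}
      = shift_cell ` {c \<in> Y. snd c < fst c} \<union> {c \<in> Z. snd c < fst c}" .
  moreover have "card (shift_cell ` {c \<in> Y. snd c < fst c} \<union> {c \<in> Z. snd c < fst c})
      = card {c \<in> Y. snd c < fst c} + card {c \<in> Z. snd c < fst c}"
    using \<open>finite Y\<close> fin disj card_image[OF inj] by (subst card_Un_disjoint) auto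
  ultimately show "below_diag (shift_cell ` Y \<union> Z) = below_diag Y + below_diag Z"
    by (simp add: below_diag_def)
qed

lemma sum_extensions:
  fixes f :: "nat \<Rightarrow> nat \<Rightarrow> int"
  assumes Y: "nonattacking m Y"
  shows "(\<Sum>Z\<in>extensions m Y. f (card Z) (below_diag Z)) = f 0 0
    + (int m + 1 - int (card Y)) * f 1 0
    + (int m - int (below_diag Y)) * f 1 1
    + (int m - int (card Y)) * (int m - int (below_diag Y)) * f 2 1"
proof -
  let ?R = "free_rows m Y" and ?D = "free_diags m Y" and ?g = "\<lambda>Z. f (card Z) (below_diag Z)"
  let ?F1 = "(\<lambda>i. {(i, i)}) ` insert (int m + 1) ?R"
  let ?F2 = "(\<lambda>t. {(int m + 1, int m + 1 - t)}) ` ?D"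
  let ?F3 = "(\<lambda>(i, t). {(i, i), (int m + 1, int m + 1 - t)}) ` (?R \<times> ?D)"
  have R: "finite ?R" "int m + 1 \<notin> ?R" "\<And>i. i \<in> ?R \<Longrightarrow> i \<le> int m"
    by (auto simp: free_rows_def)
  have D: "finite ?D" "\<And>t. t \<in> ?D \<Longrightarrow> 1 \<le> t"
    by (auto simp: free_diags_def)
  have sum_image: "sum ?g (h ` A) = int (card A) * f a b"
    if "inj_on h A" "\<And>x. x \<in> A \<Longrightarrow> card (h x) = a \<and> below_diag (h x) = b"
    for h :: "'a \<Rightarrow> (int \<times> int) set" and A a b
    using that by (simp add: sum.reindex)
  have disjoint: "A \<inter> B = {}" if "\<And>Z. Z \<in> A \<Longrightarrow> P Z" "\<And>Z. Z \<in> B \<Longrightarrow> \<not> P Z"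
    for A B :: "(int \<times> int) set set" and P
    using that by blast
  have "?F1 \<inter> ?F2 = {}"
    by (rule disjoint[of _ "\<lambda>Z. below_diag Z = 0"]) (auto dest: D(2))
  moreover have "(?F1 \<union> ?F2) \<inter> ?F3 = {}"
    by (rule disjoint[of _ "\<lambda>Z. card Z = 1"]) (auto dest: R(3))
  moreover have "{} \<notin> ?F1 \<union> ?F2 \<union> ?F3" "finite ?F1" "finite ?F2" "finite ?F3"
    using R(1) D(1) by auto
  ultimately have "sum ?g (extensions m Y) = f 0 0 + sum ?g ?F1 + sum ?g ?F2 + sum ?g ?F3"
    unfolding extensions_eq[OF Y]
    by (simp add: sum.union_disjoint del: Un_insert_left Un_insert_right image_insert)
  also have "sum ?g ?F1 = int (card (insert (int m + 1) ?R)) * f 1 0"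
    by (rule sum_image) (simp_all add: inj_on_def)
  also have "sum ?g ?F2 = int (card ?D) * f 1 1"
    by (rule sum_image) (simp_all add: D(2) inj_on_def)
  also have "sum ?g ?F3 = int (card (?R \<times> ?D)) * f 2 1"
    by (rule sum_image) (auto simp: D(2) R(3) inj_on_def doubleton_eq_iff dest: D(2) R(3))
  finally show ?thesis
    using R card_free_rows[OF Y] card_free_diags[OF Y] card_le_if_nonattacking[OF Y]
      below_diag_le_card[OF nonattacking_finite[OF Y]]
    by (simp add: card_cartesian_product of_nat_diff)
qed

lemma refined_count_Suc:
  "refined_count (Suc m) k d = refined_count m k d
     + (int m + 2 - k) * refined_count m (k - 1) d
     + (int m + 1 - d) * refined_count m (k - 1) (d - 1)
     + (int m + 2 - k) * (int m + 1 - d) * refined_count m (k - 2) (d - 1)"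
proof -
  let ?ind = "\<lambda>Y k d. of_bool (int (card Y) = k \<and> int (below_diag Y) = d) :: int"
  have step: "(\<Sum>Z\<in>extensions m Y. ?ind (shift_cell ` Y \<union> Z) k d)
      = ?ind Y k d + (int m + 2 - k) * ?ind Y (k - 1) d + (int m + 1 - d) * ?ind Y (k - 1) (d - 1)
        + (int m + 2 - k) * (int m + 1 - d) * ?ind Y (k - 2) (d - 1)"
    if "Y \<in> placements m" for Y
  proof -
    have Y: "nonattacking m Y"
      using that by (simp add: placements_def)
    let ?f = "\<lambda>a b. of_bool (int (card Y + a) = k \<and> int (below_diag Y + b) = d) :: int"
    have "(\<Sum>Z\<in>extensions m Y. ?ind (shift_cell ` Y \<union> Z) k d)
        = (\<Sum>Z\<in>extensions m Y. ?f (card Z) (below_diag Z))"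
      by (rule sum.cong) (simp_all add: card_below_diag_extend[OF Y])
    also have "\<dots> = ?f 0 0 + (int m + 1 - int (card Y)) * ?f 1 0
        + (int m - int (below_diag Y)) * ?f 1 1
        + (int m - int (card Y)) * (int m - int (below_diag Y)) * ?f 2 1"
      by (rule sum_extensions[OF Y, of ?f])
    also have "\<dots> = ?ind Y k d + (int m + 2 - k) * ?ind Y (k - 1) d
        + (int m + 1 - d) * ?ind Y (k - 1) (d - 1)
        + (int m + 2 - k) * (int m + 1 - d) * ?ind Y (k - 2) (d - 1)"
      by (auto simp: algebra_simps)
    finally show ?thesis .
  qed
  have "refined_count (Suc m) k d
      = (\<Sum>Y\<in>placements m. \<Sum>Z\<in>extensions m Y. ?ind (shift_cell ` Y \<union> Z) k d)"
    unfolding refined_count_eq_sum by (rule sum_placements_Suc)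
  also have "\<dots> = (\<Sum>Y\<in>placements m. ?ind Y k d + (int m + 2 - k) * ?ind Y (k - 1) d
      + (int m + 1 - d) * ?ind Y (k - 1) (d - 1)
      + (int m + 2 - k) * (int m + 1 - d) * ?ind Y (k - 2) (d - 1))"
    by (rule sum.cong) (simp_all add: step)
  finally show ?thesis
    by (simp add: refined_count_eq_sum sum.distrib sum_distrib_left)
qed

section \<open>A closed form for the refined count\<close>

text \<open>\<open>fibp n i d\<close> is the coefficient of \<open>y\<^sup>i x\<^sup>d\<close> in \<open>F\<^sub>n\<close>.\<close>

fun fibp :: "nat \<Rightarrow> nat \<Rightarrow> int \<Rightarrow> int" where
  "fibp 0 i d = (if i = 0 \<and> d = -1 then 1 else 0)"
| "fibp (Suc 0) i d = (if i = 0 \<and> d = 0 then 1 else 0)"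
| "fibp (Suc (Suc n)) i d =
     fibp (Suc n) i d + fibp (Suc n) i (d - 1) + (if i = 0 then 0 else fibp n (i - 1) (d - 1))"

text \<open>Coefficientwise form of
  \<open>(1 + y) \<partial>\<^sub>y F\<^sub>k\<^sub>+\<^sub>2 = F\<^sub>k\<^sub>+\<^sub>1 + (k + 1 - x \<partial>\<^sub>x) (x F\<^sub>k\<^sub>+\<^sub>1 + x y F\<^sub>k)\<close>.\<close>

lemma fibp_identity:
  "int i * fibp (Suc (Suc k)) i d + int (Suc i) * fibp (Suc (Suc k)) (Suc i) d =
     fibp (Suc k) i d
     + (int k + 1 - d) * (fibp (Suc k) i (d - 1) + (if i = 0 then 0 else fibp k (i - 1) (d - 1)))"
proof -
  define defect where "defect k i d =
    int i * fibp (Suc (Suc k)) i d + int (Suc i) * fibp (Suc (Suc k)) (Suc i) d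
    - fibp (Suc k) i d
    - (int k + 1 - d) * (fibp (Suc k) i (d - 1) + (if i = 0 then 0 else fibp k (i - 1) (d - 1)))"
    for k i d
  have "defect k i d = 0"
  proof (induction k i d rule: fibp.induct)
    case (1 i d)
    then show ?case by (simp add: defect_def)
  next
    case (2 i d)
    then show ?case by (cases i) (auto simp: defect_def)
  next
    case (3 n i d)
    have "defect (Suc (Suc n)) i d = defect (Suc n) i d + defect (Suc n) i (d - 1)
        + (if i = 0 then 0 else defect n (i - 1) (d - 1))"
      by (cases i) (simp_all add: defect_def algebra_simps)
    then show ?case using 3 by simp
  qed
  then show ?thesis by (simp add: defect_def)
qed

text \<open>\<open>stirling_rise m p j = (p + j)\<^sub>j S(m, p + j)\<close>, the weight
  \<open>(m - k + j)\<^sub>j S(m, m - k + j)\<close> of the theorem for \<open>p = m - k\<close>.\<close>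

definition stirling_rise :: "nat \<Rightarrow> nat \<Rightarrow> nat \<Rightarrow> int" where
  "stirling_rise m p j = int (pochhammer (Suc p) j * Stirling m (p + j))"

lemma stirling_rise_eq_0: "m < p + j \<Longrightarrow> stirling_rise m p j = 0"
  by (simp add: stirling_rise_def)

lemma stirling_rise_Suc_0:
  "stirling_rise (Suc m) p 0
     = int p * stirling_rise m p 0 + (if p = 0 then 0 else int (Stirling m (p - 1)))"
  by (cases p) (simp_all add: stirling_rise_def algebra_simps)

lemma stirling_rise_Suc_Suc:
  "stirling_rise (Suc m) p (Suc j)
     = (int p + int j + 1) * (stirling_rise m p (Suc j) + stirling_rise m p j)"
  by (simp add: stirling_rise_def pochhammer_Suc algebra_simps)

lemma stirling_rise_Suc_right: "stirling_rise m p (Suc j) = (int p + 1) * stirling_rise m (Suc p) j"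
  by (simp add: stirling_rise_def pochhammer_rec algebra_simps)

lemma sum_stirling_rise_Suc:
  "(\<Sum>j\<le>Suc m. stirling_rise (Suc m) p j * e j) =
     (if p = 0 then 0 else int (Stirling m (p - 1))) * e 0
     + (\<Sum>j\<le>m. stirling_rise m p j * ((int p + int j) * e j + (int p + int j + 1) * e (Suc j)))"
proof -
  let ?g = "stirling_rise m p"
  have "(\<Sum>j\<le>Suc m. stirling_rise (Suc m) p j * e j)
      = stirling_rise (Suc m) p 0 * e 0 + (\<Sum>j\<le>m. stirling_rise (Suc m) p (Suc j) * e (Suc j))"
    by (rule sum.atMost_Suc_shift)
  also have "\<dots> = (if p = 0 then 0 else int (Stirling m (p - 1))) * e 0
      + (int p * ?g 0 * e 0 + (\<Sum>j\<le>m. (int p + int (Suc j)) * ?g (Suc j) * e (Suc j)))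
      + (\<Sum>j\<le>m. (int p + int j + 1) * ?g j * e (Suc j))"
  proof -
    have "stirling_rise (Suc m) p (Suc j) * e (Suc j)
        = (int p + int (Suc j)) * ?g (Suc j) * e (Suc j) + (int p + int j + 1) * ?g j * e (Suc j)"
      for j
      unfolding stirling_rise_Suc_Suc by (simp add: algebra_simps)
    then show ?thesis
      by (simp add: stirling_rise_Suc_0 sum.distrib algebra_simps)
  qed
  also have "int p * ?g 0 * e 0 + (\<Sum>j\<le>m. (int p + int (Suc j)) * ?g (Suc j) * e (Suc j))
      = (\<Sum>j\<le>Suc m. (int p + int j) * ?g j * e j)"
    by (subst sum.atMost_Suc_shift) simp
  also have "\<dots> = (\<Sum>j\<le>m. (int p + int j) * ?g j * e j)"
    by (simp add: stirling_rise_eq_0)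
  finally show ?thesis
    by (simp add: algebra_simps sum.distrib)
qed

lemma sum_stirling_rise_pred:
  assumes "0 < p"
  shows "(\<Sum>j\<le>m. stirling_rise m (p - 1) j * e j)
    = int (Stirling m (p - 1)) * e 0 + (\<Sum>j\<le>m. stirling_rise m p j * (int p * e (Suc j)))"
proof -
  have "(\<Sum>j\<le>m. stirling_rise m (p - 1) j * e j) = (\<Sum>j\<le>Suc m. stirling_rise m (p - 1) j * e j)"
    using assms by (simp add: stirling_rise_eq_0)
  also have "\<dots> = stirling_rise m (p - 1) 0 * e 0
      + (\<Sum>j\<le>m. stirling_rise m (p - 1) (Suc j) * e (Suc j))"
    by (rule sum.atMost_Suc_shift)
  moreover have "stirling_rise m (p - 1) (Suc j) = int p * stirling_rise m p j" for j
    using assms stirling_rise_Suc_right[of m "p - 1" j] by (simp add: of_nat_diff)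
  ultimately show ?thesis
    by (simp add: stirling_rise_def mult_ac)
qed

lemma sum_stirling_rise_shift:
  "(\<Sum>j\<le>m. stirling_rise m p j * (if j = 0 then 0 else e (j - 1)))
    = (int p + 1) * (\<Sum>j\<le>m. stirling_rise m (Suc p) j * e j)"
proof -
  have "(\<Sum>j\<le>m. stirling_rise m p j * (if j = 0 then 0 else e (j - 1)))
      = (\<Sum>j\<le>Suc m. stirling_rise m p j * (if j = 0 then 0 else e (j - 1)))"
    by (simp add: stirling_rise_eq_0)
  also have "\<dots> = (\<Sum>j\<le>m. stirling_rise m p (Suc j) * e j)"
    by (subst sum.atMost_Suc_shift) simp
  finally show ?thesis
    by (simp add: stirling_rise_Suc_right sum_distrib_left mult_ac)
qed

definition refined_formula :: "nat \<Rightarrow> int \<Rightarrow> int \<Rightarrow> int" where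
  "refined_formula m k d =
     (if 0 \<le> k \<and> k \<le> int m
      then (\<Sum>j\<le>m. stirling_rise m (m - nat k) j * fibp (Suc (nat k)) j d) else 0)"

lemma refined_formula_of_nat:
  "k \<le> m \<Longrightarrow> refined_formula m (int k) d = (\<Sum>j\<le>m. stirling_rise m (m - k) j * fibp (Suc k) j d)"
  by (simp add: refined_formula_def)

lemma refined_formula_eq_0: "k < 0 \<or> int m < k \<Longrightarrow> refined_formula m k d = 0"
  by (auto simp: refined_formula_def)

lemma refined_formula_0: "refined_formula 0 k d = (if k = 0 \<and> d = 0 then 1 else 0)"
  by (auto simp: refined_formula_def stirling_rise_def)

lemma refined_formula_empty: "refined_formula m 0 d = (if d = 0 then 1 else 0)"
proof -
  have "refined_formula m 0 d = (\<Sum>j\<le>m. stirling_rise m m j * fibp 1 j d)"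
    by (simp add: refined_formula_def)
  also have "\<dots> = (\<Sum>j\<in>{0}. stirling_rise m m j * fibp 1 j d)"
    by (rule sum.mono_neutral_right) auto
  finally show ?thesis
    by (simp add: stirling_rise_def)
qed

lemma refined_formula_Suc_eq_sum:
  assumes "k \<le> m"
  shows "refined_formula m (int (Suc k)) d
    = (if m - k = 0 then 0 else int (Stirling m (m - k - 1))) * fibp (Suc (Suc k)) 0 d
      + int (m - k) * (\<Sum>j\<le>m. stirling_rise m (m - k) j * fibp (Suc (Suc k)) (Suc j) d)"
proof (cases "k = m")
  case True
  then show ?thesis
    by (simp add: refined_formula_def)
next
  case False
  then have "Suc k \<le> m" "m - Suc k = m - k - 1" "m - k \<noteq> 0"
    using assms by simp_all
  then have "refined_formula m (int (Suc k)) d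
      = (\<Sum>j\<le>m. stirling_rise m (m - k - 1) j * fibp (Suc (Suc k)) j d)"
    by (simp only: refined_formula_of_nat)
  also have "\<dots> = int (Stirling m (m - k - 1)) * fibp (Suc (Suc k)) 0 d
      + (\<Sum>j\<le>m. stirling_rise m (m - k) j * (int (m - k) * fibp (Suc (Suc k)) (Suc j) d))"
    using \<open>m - k \<noteq> 0\<close> by (intro sum_stirling_rise_pred) simp
  finally show ?thesis
    using \<open>m - k \<noteq> 0\<close> by (simp add: sum_distrib_left ac_simps del: fibp.simps)
qed

lemma refined_formula_pred_eq_sum:
  assumes "k \<le> m"
  shows "(int (m - k) + 1) * refined_formula m (int k - 1) d
    = (\<Sum>j\<le>m. stirling_rise m (m - k) j * (if j = 0 then 0 else fibp k (j - 1) d))"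
proof (cases k)
  case 0
  then show ?thesis
    using assms by (auto simp: stirling_rise_eq_0 refined_formula_def intro!: sum.neutral)
next
  case (Suc k')
  then have "int k - 1 = int k'" "k' \<le> m" "Suc (m - k) = m - k'"
    using assms by simp_all
  then have "refined_formula m (int k - 1) d = (\<Sum>j\<le>m. stirling_rise m (Suc (m - k)) j * fibp k j d)"
    using Suc by (simp only: refined_formula_of_nat)
  then show ?thesis
    using sum_stirling_rise_shift[of m "m - k" "\<lambda>j. fibp k j d"] by (simp only:)
qed

lemma refined_formula_Suc_in_range:
  assumes "1 \<le> k" "k \<le> int m + 1"
  shows "refined_formula (Suc m) k d = refined_formula m k d
     + (int m + 2 - k) * refined_formula m (k - 1) d
     + (int m + 1 - d) * refined_formula m (k - 1) (d - 1)
     + (int m + 2 - k) * (int m + 1 - d) * refined_formula m (k - 2) (d - 1)"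
proof -
  define k0 where "k0 = nat k - 1"
  have k: "k = int (Suc k0)" "k - 1 = int k0" "k - 2 = int k0 - 1" and k0: "k0 \<le> m"
    using assms by (simp_all add: k0_def)
  define p where "p = m - k0"
  define c where "c = int m + 1 - d"
  let ?g = "stirling_rise m p" and ?s = "if p = 0 then 0 else int (Stirling m (p - 1))"
  let ?E2 = "\<lambda>j. fibp (Suc (Suc k0)) j d" and ?E1 = "\<lambda>e j. fibp (Suc k0) j e"
    and ?E0 = "\<lambda>e j. if j = 0 then 0 else fibp k0 (j - 1) e"
  have "(int p + int j) * ?E2 j + (int p + int j + 1) * ?E2 (Suc j)
      = int p * ?E2 (Suc j) + (int p + 1) * ?E1 d j + c * (?E1 (d - 1) j + ?E0 (d - 1) j)" for j
    using fibp_identity[of j k0 d] k0 by (simp add: c_def p_def algebra_simps)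
  moreover have "Suc m - Suc k0 = p"
    by (simp add: p_def)
  ultimately have lhs: "refined_formula (Suc m) k d = ?s * ?E2 0
      + (\<Sum>j\<le>m. ?g j * (int p * ?E2 (Suc j) + (int p + 1) * ?E1 d j
          + c * (?E1 (d - 1) j + ?E0 (d - 1) j)))"
    using k0 unfolding k(1) by (simp only: refined_formula_of_nat Suc_le_mono sum_stirling_rise_Suc)
  have rhs0: "refined_formula m k d = ?s * ?E2 0 + int p * (\<Sum>j\<le>m. ?g j * ?E2 (Suc j))"
    unfolding k(1) refined_formula_Suc_eq_sum[OF k0] p_def ..
  have rhs1: "refined_formula m (k - 1) e = (\<Sum>j\<le>m. ?g j * ?E1 e j)" for e
    unfolding k(2) refined_formula_of_nat[OF k0] p_def ..
  have rhs2: "(int p + 1) * c * refined_formula m (k - 2) (d - 1)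
      = c * (\<Sum>j\<le>m. ?g j * ?E0 (d - 1) j)"
    using refined_formula_pred_eq_sum[OF k0, of "d - 1"] k0
    unfolding k(1,3) p_def by (simp add: of_nat_diff ac_simps)
  have w: "int m + 2 - k = int p + 1"
    using k k0 by (simp add: p_def)
  show ?thesis
    unfolding lhs rhs0 rhs1 c_def[symmetric] rhs2 w
    by (simp add: sum.distrib sum_distrib_left algebra_simps del: fibp.simps)
qed

lemma refined_formula_Suc:
  "refined_formula (Suc m) k d = refined_formula m k d
     + (int m + 2 - k) * refined_formula m (k - 1) d
     + (int m + 1 - d) * refined_formula m (k - 1) (d - 1)
     + (int m + 2 - k) * (int m + 1 - d) * refined_formula m (k - 2) (d - 1)"
proof -
  consider "k < 0" | "k = 0" | "1 \<le> k \<and> k \<le> int m + 1" | "k = int m + 2" | "int m + 2 < k"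
    by linarith
  then show ?thesis
    by cases (simp_all add: refined_formula_eq_0 refined_formula_empty refined_formula_Suc_in_range)
qed

lemma refined_count_eq_refined_formula: "refined_count m k d = refined_formula m k d"
  by (induction m arbitrary: k d)
    (simp_all add: refined_count_0 refined_formula_0 refined_count_Suc refined_formula_Suc)

section \<open>Summing over the diagonal statistic\<close>

lemma fibp_eq_0:
  assumes "d < -1 \<or> int n \<le> d \<or> (0 < n \<and> d < 0)"
  shows "fibp n j d = 0"
  using assms by (induction n j d rule: fibp.induct) auto

fun fibp_row :: "nat \<Rightarrow> nat \<Rightarrow> int" where
  "fibp_row 0 j = (if j = 0 then 1 else 0)"
| "fibp_row (Suc 0) j = (if j = 0 then 1 else 0)"
| "fibp_row (Suc (Suc n)) j = 2 * fibp_row (Suc n) j + (if j = 0 then 0 else fibp_row n (j - 1))"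

lemma sum_fibp_eq_fibp_row:
  assumes "finite S" "{-1..int n} \<subseteq> S"
  shows "(\<Sum>d\<in>S. fibp n j d) = fibp_row n j"
  using assms
proof (induction n j arbitrary: S rule: fibp_row.induct)
  case (1 j)
  then show ?case
    by (cases "j = 0") (auto simp: sum.delta[OF \<open>finite S\<close>])
next
  case (2 j)
  then show ?case
    by (cases "j = 0") (auto simp: sum.delta[OF \<open>finite S\<close>])
next
  case (3 n j)
  let ?T = "(\<lambda>d. d - 1) ` S"
  have shift: "(\<Sum>d\<in>S. f (d - 1)) = (\<Sum>d\<in>?T. f d)" for f :: "int \<Rightarrow> int"
    by (simp add: sum.reindex inj_on_def)
  have T: "finite ?T" "{-1..int (Suc n)} \<subseteq> ?T"
  proof -
    show "finite ?T"
      using 3 by simp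
    have "x \<in> ?T" if "x \<in> {-1..int (Suc n)}" for x
      using that 3(4) by (intro image_eqI[of x _ "x + 1"]) auto
    then show "{-1..int (Suc n)} \<subseteq> ?T"
      by blast
  qed
  have "(\<Sum>d\<in>S. fibp (Suc (Suc n)) j d) = (\<Sum>d\<in>S. fibp (Suc n) j d) + (\<Sum>d\<in>?T. fibp (Suc n) j d)
      + (if j = 0 then 0 else (\<Sum>d\<in>?T. fibp n (j - 1) d))"
    by (simp add: sum.distrib shift[symmetric])
  also have "\<dots> = fibp_row (Suc (Suc n)) j"
  proof -
    have "{-1..int (Suc n)} \<subseteq> S" "{-1..int n} \<subseteq> ?T"
      using 3(4) T(2) by auto
    then show ?thesis
      using 3 T by simp
  qed
  finally show ?case .
qed

lemma sum_fibp_Suc: "(\<Sum>d\<in>{0..int k}. fibp (Suc k) j d) = fibp_row (Suc k) j"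
proof -
  have "(\<Sum>d\<in>{0..int k}. fibp (Suc k) j d) = (\<Sum>d\<in>{-1..int (Suc k)}. fibp (Suc k) j d)"
    by (rule sum.mono_neutral_left) (auto intro!: fibp_eq_0)
  also have "\<dots> = fibp_row (Suc k) j"
    by (rule sum_fibp_eq_fibp_row) auto
  finally show ?thesis .
qed

definition binom_bracket :: "nat \<Rightarrow> nat \<Rightarrow> nat" where
  "binom_bracket k j = (if j = 0 then 0 else (k - j) choose (j - 1)) + ((Suc k - j) choose j)"

lemma binom_bracket_Suc:
  assumes "1 \<le> n" "1 \<le> j" "2 * j \<le> Suc n"
  shows "binom_bracket (Suc n) j = binom_bracket n j + binom_bracket (n - 1) (j - 1)"
proof -
  define i where "i = j - 1"
  define r where "r = n - j"
  have j: "j = Suc i" and n: "n = r + Suc i"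
    using assms by (simp_all add: i_def r_def)
  show ?thesis
    by (cases i) (simp_all add: binom_bracket_def j n)
qed

definition row_formula :: "nat \<Rightarrow> nat \<Rightarrow> int" where
  "row_formula k j = (if 2 * j \<le> Suc k then 2 ^ (Suc k - 2 * j) * int (binom_bracket k j) else 0)"

lemma row_formula_Suc_Suc:
  "row_formula (Suc (Suc k)) j
     = 2 * row_formula (Suc k) j + (if j = 0 then 0 else row_formula k (j - 1))"
proof -
  consider "j = 0" | "1 \<le> j" "2 * j \<le> Suc (Suc k)" | "2 * j = Suc (Suc (Suc k))"
    | "Suc (Suc (Suc k)) < 2 * j"
    by linarith
  then show ?thesis
  proof cases
    case 1
    then show ?thesis
      by (simp add: row_formula_def binom_bracket_def)
  next
    case 2
    then have "Suc (Suc (Suc k)) - 2 * j = Suc (Suc (Suc k) - 2 * j)"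
      "Suc k - 2 * (j - 1) = Suc (Suc (Suc k)) - 2 * j" "2 * (j - 1) \<le> Suc k"
      by auto
    then show ?thesis
      using 2 binom_bracket_Suc[of "Suc k" j] by (simp add: row_formula_def algebra_simps)
  next
    case 3
    define i where "i = j - 2"
    have "j = Suc (Suc i)" "k = Suc (2 * i)"
      using 3 by (simp_all add: i_def)
    then show ?thesis
      by (simp add: row_formula_def binom_bracket_def)
  next
    case 4
    then have "\<not> 2 * (j - 1) \<le> Suc k"
      by simp
    then show ?thesis
      using 4 by (simp add: row_formula_def)
  qed
qed

lemma fibp_row_closed_form: "2 * fibp_row (Suc k) j = row_formula k j"
proof (induction k arbitrary: j rule: less_induct)
  case (less k)
  consider "k = 0" | "k = 1" | k' where "k = Suc (Suc k')"
    by (metis One_nat_def not0_implies_Suc)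
  then show ?case
  proof cases
    case 1
    then show ?thesis
      by (cases j) (simp_all add: row_formula_def binom_bracket_def)
  next
    case 2
    then show ?thesis
      by (cases j) (auto simp: row_formula_def binom_bracket_def numeral_2_eq_2)
  next
    case 3
    then have "2 * fibp_row (Suc k) j
        = 2 * (2 * fibp_row (Suc (Suc k')) j)
          + (if j = 0 then 0 else 2 * fibp_row (Suc k') (j - 1))"
      by simp
    then show ?thesis
      using less.IH[of "Suc k'"] less.IH[of k'] 3
      by (simp add: row_formula_Suc_Suc del: fibp_row.simps)
  qed
qed

lemma fibp_row_eq_0: "Suc k < 2 * j \<Longrightarrow> fibp_row (Suc k) j = 0"
  using fibp_row_closed_form[of k j] by (simp add: row_formula_def)

lemma anassa_count_eq_sum_fibp_row:
  assumes "k \<le> m"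
  shows "int (anassa_count m k)
    = (\<Sum>j = 0..(k + 1) div 2. stirling_rise m (m - k) j * fibp_row (Suc k) j)"
proof -
  have "int (anassa_count m k)
      = (\<Sum>d\<in>{0..int k}. \<Sum>j\<le>m. stirling_rise m (m - k) j * fibp (Suc k) j d)"
    using assms by (simp add: anassa_count_eq_sum_refined_count refined_count_eq_refined_formula
        refined_formula_of_nat)
  also have "\<dots> = (\<Sum>j\<le>m. stirling_rise m (m - k) j * (\<Sum>d\<in>{0..int k}. fibp (Suc k) j d))"
    by (simp add: sum.swap[of _ "{0..int k}"] sum_distrib_left)
  also have "\<dots> = (\<Sum>j\<le>m. stirling_rise m (m - k) j * fibp_row (Suc k) j)"
    by (simp only: sum_fibp_Suc)
  also have "\<dots> = (\<Sum>j\<le>k. stirling_rise m (m - k) j * fibp_row (Suc k) j)"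
    using assms by (intro sum.mono_neutral_right) (auto simp: stirling_rise_eq_0)
  also have "\<dots> = (\<Sum>j = 0..(k + 1) div 2. stirling_rise m (m - k) j * fibp_row (Suc k) j)"
  proof (intro sum.mono_neutral_right ballI)
    fix j assume "j \<in> {..k} - {0..(k + 1) div 2}"
    then have "Suc k < 2 * j"
      by auto
    then show "stirling_rise m (m - k) j * fibp_row (Suc k) j = 0"
      by (simp add: fibp_row_eq_0)
  qed auto
  finally show ?thesis .
qed

section \<open>Evaluating the terms of the formula\<close>

lemma falling_fact_of_nat_add: "falling_fact (int (p + j)) j = int (pochhammer (Suc p) j)"
proof (induction j)
  case 0
  then show ?case
    by (simp add: falling_fact_def)
next
  case (Suc j)
  have "falling_fact (int (p + Suc j)) (Suc j)
      = int (p + Suc j) * (\<Prod>i<j. int (p + Suc j) - int (Suc i))"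
    unfolding falling_fact_def by (subst prod.lessThan_Suc_shift) simp
  also have "(\<Prod>i<j. int (p + Suc j) - int (Suc i)) = falling_fact (int (p + j)) j"
    by (simp add: falling_fact_def)
  finally show ?case
    using Suc by (simp add: pochhammer_Suc algebra_simps)
qed

lemma falling_fact_of_nat: "falling_fact (int n) r = fact r * int (n choose r)"
proof -
  have "real_of_int (falling_fact (int n) r) = (\<Prod>i = 0..<r. real n - of_nat i)"
    by (simp add: falling_fact_def atLeast0LessThan)
  also have "\<dots> = fact r * (real n gchoose r)"
    by (rule gbinomial_mult_fact[symmetric])
  also have "\<dots> = real_of_int (fact r * int (n choose r))"
    by (simp add: binomial_gbinomial)
  finally show ?thesis
    by (simp only: of_int_eq_iff)
qed

lemma binom_ext_of_nat: "binom_ext (int n) (int r) = int (n choose r)"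
  by (simp add: binom_ext_def falling_fact_of_nat)

lemma binom_ext_sum_eq_binom_bracket:
  assumes "2 * j \<le> Suc k"
  shows "binom_ext (int k - int j) (int j - 1) + binom_ext (int k - int j + 1) (int j)
    = int (binom_bracket k j)"
proof (cases j)
  case 0
  then show ?thesis
    by (simp add: binom_ext_def falling_fact_def binom_bracket_def)
next
  case (Suc i)
  then have "int k - int j = int (k - j)" "int j - 1 = int i" "int k - int j + 1 = int (Suc k - j)"
    using assms by auto
  then have "binom_ext (int k - int j) (int j - 1) = int ((k - j) choose i)"
    "binom_ext (int k - int j + 1) (int j) = int ((Suc k - j) choose j)"
    by (simp_all only: binom_ext_of_nat)
  then show ?thesis
    using Suc by (simp add: binom_bracket_def)
qed

lemma Stirling2_ext_of_nat: "Stirling2_ext (int m) (int r) = int (Stirling m r)"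
  by (simp add: Stirling2_ext_def)

lemma fibp_row_eq_powi:
  assumes "2 * j \<le> Suc k"
  shows "real_of_int (fibp_row (Suc k) j)
    = (2::real) powi (int k - 2 * int j) * real (binom_bracket k j)"
proof -
  have "int k - 2 * int j = int (Suc k - 2 * j) - 1"
    using assms by simp
  then have "(2::real) powi (int k - 2 * int j) = 2 powi (int (Suc k - 2 * j) - 1)"
    by (simp only:)
  also have "\<dots> = 2 powi (int (Suc k - 2 * j)) / 2 powi 1"
    by (rule power_int_diff) simp
  also have "\<dots> = 2 ^ (Suc k - 2 * j) / 2"
    by (simp only: power_int_of_nat power_int_1_right)
  finally have "2 ^ (Suc k - 2 * j) = 2 * (2::real) powi (int k - 2 * int j)"
    by simp
  then have "2 * real_of_int (fibp_row (Suc k) j)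
      = 2 * ((2::real) powi (int k - 2 * int j) * real (binom_bracket k j))"
    using arg_cong[OF fibp_row_closed_form[of k j], of real_of_int] assms
    by (simp add: row_formula_def)
  then show ?thesis
    by simp
qed

lemma formula_term_eq:
  assumes "k \<le> m" "2 * j \<le> Suc k"
  shows "real_of_int (falling_fact (int m - int k + int j) j
        * Stirling2_ext (int m) (int m - int k + int j))
      * (2::real) powi (int k - 2 * int j)
      * real_of_int (binom_ext (int k - int j) (int j - 1) + binom_ext (int k - int j + 1) (int j))
    = real_of_int (stirling_rise m (m - k) j * fibp_row (Suc k) j)"
proof -
  have shift: "int m - int k + int j = int (m - k + j)"
    using assms by simp
  show ?thesis
    unfolding shift falling_fact_of_nat_add Stirling2_ext_of_nat
      binom_ext_sum_eq_binom_bracket[OF assms(2)] stirling_rise_def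
    by (simp add: fibp_row_eq_powi[OF assms(2)])
qed

lemma formula_term_eq_0:
  assumes "m < k"
  shows "falling_fact (int m - int k + int j) j * Stirling2_ext (int m) (int m - int k + int j) = 0"
proof (cases "0 \<le> int m - int k + int j")
  case True
  then have "falling_fact (int m - int k + int j) j = 0"
    using assms unfolding falling_fact_def
    by (intro prod_zero bexI[of _ "nat (int m - int k + int j)"]) auto
  then show ?thesis
    by simp
next
  case False
  then show ?thesis
    by (simp add: Stirling2_ext_def)
qed

lemma nat_ceiling_half: "nat \<lceil>real k / 2\<rceil> = (k + 1) div 2"
proof -
  have "\<lceil>real k / 2\<rceil> = - (- int k div 2)"
    using ceiling_divide_eq_div[of "int k" 2] by simp
  also have "\<dots> = int ((k + 1) div 2)"
    by presburger
  finally show ?thesis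
    by simp
qed

theorem theorem3p2:
  fixes m k :: nat
  shows "real (anassa_count m k) =
    (\<Sum>j = 0..nat \<lceil>real k / 2\<rceil>.
       real_of_int (falling_fact (int m - int k + int j) j
                    * Stirling2_ext (int m) (int m - int k + int j))
       * (2::real) powi (int k - 2 * int j)
       * real_of_int (binom_ext (int k - int j) (int j - 1) + binom_ext (int k - int j + 1) (int j)))"
proof (cases "k \<le> m")
  case True
  have count: "real (anassa_count m k)
      = (\<Sum>j = 0..(k + 1) div 2. real_of_int (stirling_rise m (m - k) j * fibp_row (Suc k) j))"
    using anassa_count_eq_sum_fibp_row[OF True] by (metis of_int_of_nat_eq of_int_sum)
  show ?thesis
    unfolding count nat_ceiling_half
  proof (rule sum.cong[OF refl], rule formula_term_eq[OF True, symmetric])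
    fix j assume "j \<in> {0..(k + 1) div 2}"
    then show "2 * j \<le> Suc k"
      by auto
  qed
next
  case False
  then show ?thesis
    by (simp add: anassa_count_eq_0 formula_term_eq_0)
qed

end
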